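(* Let $H$ be a Hilbert space with norm $\|\cdot\|$ and let $\tau>0$. There is a constant $c_{12}\ge 1$, independent of $\tau$, $N$ and the sequence, such that for every sequence $(u^n)_{n\ge 0}$ in $H$ and every $N\ge 2$ the seminorms \[ |(u^n)|_{\tau,1} = \Big(\tau \sum_{n=2}^N \|\dot u^n\|^2 + \tau\|d_t u^1\|^2\Big)^{1/2},\qquad |(u^n)|_{\tau,2} = \Big(\tau\sum_{n=1}^N \|d_t u^n\|^2\Big)^{1/2} \] satisfy $c_{12}^{-1}|(u^n)|_{\tau,1} \le |(u^n)|_{\tau,2} \le c_{12}|(u^n)|_{\tau,1}$.
   Context: For a sequence $(u^n)$ and step size $\tau>0$: $d_t u^n = (u^n-u^{n-1})/\tau$ for $n\ge 1$, and $\dot u^n = \frac{1}{2\tau}(3u^n - 4u^{n-1} + u^{n-2})$ for $n\ge 2$ (the BDF2 difference quotient). *)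

theory Defs
  imports "HOL-Analysis.Analysis"
begin

definition dt :: "real \<Rightarrow> (nat \<Rightarrow> 'a::real_normed_vector) \<Rightarrow> nat \<Rightarrow> 'a" where
  "dt \<tau> u n = (1 / \<tau>) *\<^sub>R (u n - u (n - 1))"

definition bdf2 :: "real \<Rightarrow> (nat \<Rightarrow> 'a::real_normed_vector) \<Rightarrow> nat \<Rightarrow> 'a" where
  "bdf2 \<tau> u n = (1 / (2 * \<tau>)) *\<^sub>R (3 *\<^sub>R u n - 4 *\<^sub>R u (n - 1) + u (n - 2))"

definition seminorm1 :: "real \<Rightarrow> nat \<Rightarrow> (nat \<Rightarrow> 'a::real_normed_vector) \<Rightarrow> real" where
  "seminorm1 \<tau> N u = sqrt (\<tau> * (\<Sum>n=2..N. (norm (bdf2 \<tau> u n))\<^sup>2) + \<tau> * (norm (dt \<tau> u 1))\<^sup>2)"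

definition seminorm2 :: "real \<Rightarrow> nat \<Rightarrow> (nat \<Rightarrow> 'a::real_normed_vector) \<Rightarrow> real" where
  "seminorm2 \<tau> N u = sqrt (\<tau> * (\<Sum>n=1..N. (norm (dt \<tau> u n))\<^sup>2))"

end

theory Submission
  imports Defs
begin

text \<open>
Writing \<open>D n\<close> for the backward quotient and \<open>B n\<close> for the BDF2 quotient, one has
\<open>B n = 3/2 D n - 1/2 D (n - 1)\<close> and equivalently \<open>D n = 2/3 B n + 1/3 D (n - 1)\<close>.
Convexity of the squared norm turns these into
\<open>|B n|\<^sup>2 \<le> 9/2 |D n|\<^sup>2 + 1/2 |D (n - 1)|\<^sup>2\<close> and \<open>|D n|\<^sup>2 \<le> 2/3 |B n|\<^sup>2 + 1/3 |D (n - 1)|\<^sup>2\<close>.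
Summed over \<open>n\<close>, the shifted sum of \<open>|D|\<^sup>2\<close> is bounded by the unshifted one; in the second
inequality it carries the factor \<open>1/3 < 1\<close> and can be absorbed into the left-hand side.
\<close>

lemma bdf2_eq_dt:
  fixes u :: "nat \<Rightarrow> 'a::real_normed_vector"
  assumes "n \<ge> 2"
  shows "bdf2 \<tau> u n = (3/2) *\<^sub>R dt \<tau> u n - (1/2) *\<^sub>R dt \<tau> u (n - 1)"
proof -
  have "n - 1 - 1 = n - 2" by simp
  then show ?thesis
    unfolding bdf2_def dt_def by (simp add: algebra_simps flip: scaleR_add_left)
qed

lemma dt_eq_bdf2:
  fixes u :: "nat \<Rightarrow> 'a::real_normed_vector"
  assumes "n \<ge> 2"
  shows "dt \<tau> u n = (2/3) *\<^sub>R bdf2 \<tau> u n + (1/3) *\<^sub>R dt \<tau> u (n - 1)"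
  by (simp add: bdf2_eq_dt[OF assms] algebra_simps)

lemma power2_norm_convex_comb_le:
  fixes x y :: "'a::real_normed_vector"
  assumes "0 \<le> t" "t \<le> 1"
  shows "(norm (t *\<^sub>R x + (1 - t) *\<^sub>R y))\<^sup>2 \<le> t * (norm x)\<^sup>2 + (1 - t) * (norm y)\<^sup>2"
proof -
  have "norm (t *\<^sub>R x + (1 - t) *\<^sub>R y) \<le> t * norm x + (1 - t) * norm y"
    using norm_triangle_ineq[of "t *\<^sub>R x" "(1 - t) *\<^sub>R y"] assms by simp
  then have "(norm (t *\<^sub>R x + (1 - t) *\<^sub>R y))\<^sup>2 \<le> (t * norm x + (1 - t) * norm y)\<^sup>2"
    by (simp add: power_mono)
  also have "\<dots> = t * (norm x)\<^sup>2 + (1 - t) * (norm y)\<^sup>2 - t * (1 - t) * (norm x - norm y)\<^sup>2"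
    by (simp add: power2_eq_square algebra_simps)
  also have "\<dots> \<le> t * (norm x)\<^sup>2 + (1 - t) * (norm y)\<^sup>2"
    using assms by simp
  finally show ?thesis .
qed

lemma power2_norm_bdf2_le:
  fixes u :: "nat \<Rightarrow> 'a::real_normed_vector"
  assumes "n \<ge> 2"
  shows "(norm (bdf2 \<tau> u n))\<^sup>2 \<le> 9/2 * (norm (dt \<tau> u n))\<^sup>2 + 1/2 * (norm (dt \<tau> u (n - 1)))\<^sup>2"
proof -
  have "bdf2 \<tau> u n = (1/2) *\<^sub>R (3 *\<^sub>R dt \<tau> u n) + (1 - 1/2) *\<^sub>R (- dt \<tau> u (n - 1))"
    by (simp add: bdf2_eq_dt[OF assms])
  then show ?thesis
    using power2_norm_convex_comb_le[of "1/2" "3 *\<^sub>R dt \<tau> u n" "- dt \<tau> u (n - 1)"]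
    by (simp add: power_mult_distrib)
qed

lemma power2_norm_dt_le:
  fixes u :: "nat \<Rightarrow> 'a::real_normed_vector"
  assumes "n \<ge> 2"
  shows "(norm (dt \<tau> u n))\<^sup>2 \<le> 2/3 * (norm (bdf2 \<tau> u n))\<^sup>2 + 1/3 * (norm (dt \<tau> u (n - 1)))\<^sup>2"
  using power2_norm_convex_comb_le[of "2/3" "bdf2 \<tau> u n" "dt \<tau> u (n - 1)"]
  by (simp add: dt_eq_bdf2[OF assms])

lemma sum_shifted_le:
  fixes f :: "nat \<Rightarrow> real"
  assumes "\<And>n. 0 \<le> f n"
  shows "(\<Sum>n=2..N. f (n - 1)) \<le> (\<Sum>n=1..N. f n)"
proof -
  have "(\<Sum>n=2..N. f (n - 1)) = (\<Sum>n=1..N - 1. f n)"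
    using sum.shift_bounds_cl_Suc_ivl[of "\<lambda>n. f (n - 1)" 1 "N - 1"]
    by (cases N) (simp_all add: numeral_2_eq_2)
  also have "\<dots> \<le> (\<Sum>n=1..N. f n)"
    by (rule sum_mono2) (auto simp: assms)
  finally show ?thesis .
qed

lemma sum_split_first:
  fixes f :: "nat \<Rightarrow> 'a::comm_monoid_add"
  assumes "N \<ge> 1"
  shows "(\<Sum>n=1..N. f n) = f 1 + (\<Sum>n=2..N. f n)"
  using assms by (simp add: sum.atLeast_Suc_atMost numeral_2_eq_2)

lemma sum_bdf2_le_sum_dt:
  fixes u :: "nat \<Rightarrow> 'a::real_normed_vector"
  assumes "N \<ge> 1"
  shows "(\<Sum>n=2..N. (norm (bdf2 \<tau> u n))\<^sup>2) + (norm (dt \<tau> u 1))\<^sup>2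
           \<le> 6 * (\<Sum>n=1..N. (norm (dt \<tau> u n))\<^sup>2)"
proof -
  define a where "a n = (norm (dt \<tau> u n))\<^sup>2" for n
  have a_nonneg: "0 \<le> a n" for n
    by (simp add: a_def)
  have "(\<Sum>n=2..N. (norm (bdf2 \<tau> u n))\<^sup>2) \<le> (\<Sum>n=2..N. 9/2 * a n + 1/2 * a (n - 1))"
    unfolding a_def by (intro sum_mono power2_norm_bdf2_le) simp
  also have "\<dots> = 9/2 * (\<Sum>n=2..N. a n) + 1/2 * (\<Sum>n=2..N. a (n - 1))"
    by (simp add: sum.distrib sum_distrib_left)
  also have "\<dots> \<le> 9/2 * (\<Sum>n=1..N. a n) + 1/2 * (\<Sum>n=1..N. a n)"
    using sum_split_first[OF assms, of a] sum_shifted_le[of a N, OF a_nonneg] a_nonneg[of 1] a_nonneg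
    by linarith
  finally show ?thesis
    using sum_split_first[OF assms, of a] sum_nonneg[of "{2..N}" a] a_nonneg
    by (simp add: a_def)
qed

lemma sum_dt_le_sum_bdf2:
  fixes u :: "nat \<Rightarrow> 'a::real_normed_vector"
  assumes "N \<ge> 1"
  shows "(\<Sum>n=1..N. (norm (dt \<tau> u n))\<^sup>2)
           \<le> 3/2 * ((\<Sum>n=2..N. (norm (bdf2 \<tau> u n))\<^sup>2) + (norm (dt \<tau> u 1))\<^sup>2)"
proof -
  define a where "a n = (norm (dt \<tau> u n))\<^sup>2" for n
  define b where "b n = (norm (bdf2 \<tau> u n))\<^sup>2" for n
  have a_nonneg: "0 \<le> a n" for n
    by (simp add: a_def)
  have "(\<Sum>n=2..N. a n) \<le> (\<Sum>n=2..N. 2/3 * b n + 1/3 * a (n - 1))"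
    unfolding a_def b_def by (intro sum_mono power2_norm_dt_le) simp
  also have "\<dots> = 2/3 * (\<Sum>n=2..N. b n) + 1/3 * (\<Sum>n=2..N. a (n - 1))"
    by (simp add: sum.distrib sum_distrib_left)
  finally have "(\<Sum>n=2..N. a n) \<le> (\<Sum>n=2..N. b n) + a 1 / 2"
    using sum_split_first[OF assms, of a] sum_shifted_le[of a N, OF a_nonneg] a_nonneg
    by linarith
  then show ?thesis
    using sum_split_first[OF assms, of a] sum_nonneg[of "{2..N}" b] a_nonneg[of 1]
    by (simp add: a_def b_def)
qed

lemma seminorm1_nonneg:
  assumes "0 \<le> \<tau>"
  shows "0 \<le> seminorm1 \<tau> N u"
  using assms by (simp add: seminorm1_def sum_nonneg)

lemma seminorm1_le_seminorm2:
  fixes u :: "nat \<Rightarrow> 'a::real_normed_vector"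
  assumes "0 \<le> \<tau>" "N \<ge> 1"
  shows "seminorm1 \<tau> N u \<le> sqrt 6 * seminorm2 \<tau> N u"
proof -
  have "\<tau> * ((\<Sum>n=2..N. (norm (bdf2 \<tau> u n))\<^sup>2) + (norm (dt \<tau> u 1))\<^sup>2)
          \<le> 6 * (\<tau> * (\<Sum>n=1..N. (norm (dt \<tau> u n))\<^sup>2))"
    using mult_left_mono[OF sum_bdf2_le_sum_dt[OF assms(2)] assms(1)] by (simp add: mult_ac)
  then show ?thesis
    unfolding seminorm1_def seminorm2_def by (simp add: distrib_left flip: real_sqrt_mult)
qed

lemma seminorm2_le_seminorm1:
  fixes u :: "nat \<Rightarrow> 'a::real_normed_vector"
  assumes "0 \<le> \<tau>" "N \<ge> 1"
  shows "seminorm2 \<tau> N u \<le> sqrt (3/2) * seminorm1 \<tau> N u"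
proof -
  have "\<tau> * (\<Sum>n=1..N. (norm (dt \<tau> u n))\<^sup>2)
          \<le> 3/2 * (\<tau> * (\<Sum>n=2..N. (norm (bdf2 \<tau> u n))\<^sup>2) + \<tau> * (norm (dt \<tau> u 1))\<^sup>2)"
    using mult_left_mono[OF sum_dt_le_sum_bdf2[OF assms(2)] assms(1)] by (simp add: algebra_simps)
  then show ?thesis
    unfolding seminorm1_def seminorm2_def by (simp flip: real_sqrt_mult)
qed

theorem lemma2p1:
  "\<exists>c12::real. c12 \<ge> 1 \<and>
     (\<forall>\<tau>::real. \<forall>N::nat. \<forall>u::nat \<Rightarrow> 'a::{real_inner, complete_space}.
        \<tau> > 0 \<longrightarrow> N \<ge> 2 \<longrightarrow>
        seminorm1 \<tau> N u / c12 \<le> seminorm2 \<tau> N u \<and>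
        seminorm2 \<tau> N u \<le> c12 * seminorm1 \<tau> N u)"
proof (intro exI[of _ "sqrt 6"] conjI allI impI)
  fix \<tau> :: real and N :: nat and u :: "nat \<Rightarrow> 'a"
  assume "\<tau> > 0" "N \<ge> 2"
  then have "0 \<le> \<tau>" "N \<ge> 1" by simp_all
  show "seminorm1 \<tau> N u / sqrt 6 \<le> seminorm2 \<tau> N u"
    using seminorm1_le_seminorm2[OF \<open>0 \<le> \<tau>\<close> \<open>N \<ge> 1\<close>, of u]
    by (simp add: divide_le_eq mult.commute)
  have "sqrt (3/2) * seminorm1 \<tau> N u \<le> sqrt 6 * seminorm1 \<tau> N u"
    using seminorm1_nonneg[OF \<open>0 \<le> \<tau>\<close>] by (intro mult_right_mono) simp_all
  then show "seminorm2 \<tau> N u \<le> sqrt 6 * seminorm1 \<tau> N u"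
    using seminorm2_le_seminorm1[OF \<open>0 \<le> \<tau>\<close> \<open>N \<ge> 1\<close>, of u] by linarith
qed simp

end
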